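(* Let $\mathfrak X$ be a metric measure space and $1\le p_1<p_2<\infty$. If ${\rm BMO}^{p_2}(\mathfrak X)\subsetneq{\rm BMO}^{p_1}(\mathfrak X)$, then for every $\alpha\in(1,\infty)$ also ${\rm BMO}^{\alpha p_2}(\mathfrak X)\subsetneq{\rm BMO}^{\alpha p_1}(\mathfrak X)$.
   Context: A metric measure space is $(X,\rho,\mu)$ with $X$ nonempty, $\rho$ a metric, $\mu$ a nonnegative Borel measure. For locally integrable $f$ and an open ball $B$ with $\mu(B)\in(0,\infty)$, $f_B=\mu(B)^{-1}\int_Bf\,d\mu$. For $p\in[1,\infty)$, ${\rm BMO}^p(\mathfrak X)$ consists of locally integrable $f$ with $\|f\|_{*,p}=\sup_B\big(\mu(B)^{-1}\int_B|f-f_B|^pd\mu\big)^{1/p}<\infty$, supremum over open balls with $\mu(B)\in(0,\infty)$. By Hölder's inequality ${\rm BMO}^{q}(\mathfrak X)\subset{\rm BMO}^{p}(\mathfrak X)$ whenever $p<q$. *)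

theory Defs
  imports "HOL-Analysis.Analysis"
begin

text \<open>Metric measure space: the metric space is the type 'a (metric dist),
  the measure M is a Borel measure on it (sets M = sets borel).\<close>

definition admissible_balls :: "'a::metric_space measure \<Rightarrow> 'a set set" where
  "admissible_balls M = {ball x r | x r. 0 < emeasure M (ball x r) \<and> emeasure M (ball x r) < \<infinity>}"

definition loc_integrable :: "'a::metric_space measure \<Rightarrow> ('a \<Rightarrow> real) \<Rightarrow> bool" where
  "loc_integrable M f \<longleftrightarrow> f \<in> borel_measurable M \<and>
     (\<forall>x r. emeasure M (ball x r) < \<infinity> \<longrightarrow> set_integrable M (ball x r) f)"

definition ball_avg :: "'a::metric_space measure \<Rightarrow> ('a \<Rightarrow> real) \<Rightarrow> 'a set \<Rightarrow> real" where
  "ball_avg M f B = (set_lebesgue_integral M B f) / measure M B"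

definition bmo_pow :: "real \<Rightarrow> 'a::metric_space measure \<Rightarrow> ('a \<Rightarrow> real) \<Rightarrow> ennreal" where
  "bmo_pow p M f = (SUP B \<in> admissible_balls M.
      (\<integral>\<^sup>+ y. indicator B y * ennreal (\<bar>f y - ball_avg M f B\<bar> powr p) \<partial>M) / emeasure M B)"

text \<open>BMO^p(X): locally integrable f with finite BMO^p seminorm
  (finiteness of the p-th power is equivalent to finiteness of the seminorm).\<close>
definition BMO :: "'a::metric_space measure \<Rightarrow> real \<Rightarrow> ('a \<Rightarrow> real) set" where
  "BMO M p = {f. loc_integrable M f \<and> bmo_pow p M f < \<infinity>}"

end

theory Submission
  imports Defs
begin

(* Take f in BMO^p1 but not in BMO^p2, and theta = 1/alpha. If Phi is theta-Hoelder, then on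
   every ball B one has |Phi o f - (Phi o f)_B|^(alpha p) <~ |f - f_B|^p + 1, so Phi o f lies in
   BMO^(alpha p1). Conversely, for psi_c(t) = |t - c|^theta - |c|^theta and c = f_B one has
   |f - f_B|^p2 <~ |psi_c o f - (psi_c o f)_B|^(alpha p2) + 1 on B, so psi_c o f inherits the large
   BMO^p2 oscillation of f on B. To serve a whole sequence of balls B_j, take
   Phi = sum_j eps_j 2^-j psi_(c_j) with c_j = f_(B_j) and switches eps in {0,1}^N: flipping eps_j
   changes Phi o f by 2^-j psi_(c_j) o f, so one of the two choices oscillates strongly on B_j,
   while by Fatou the oscillation on a fixed ball is lower semicontinuous in eps. A Baire category
   argument on the Cantor space of switches then gives eps with Phi o f outside BMO^(alpha p2). *)

lemma powr_add_le_add_powr: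
  fixes x y t :: real
  assumes "0 \<le> x" "0 \<le> y" "0 < t" "t \<le> 1"
  shows "(x + y) powr t \<le> x powr t + y powr t"
proof (cases "x = 0 \<or> y = 0")
  case True
  then show ?thesis using assms by auto
next
  case False
  define s where "s = x + y"
  have s: "0 < s" "x \<le> s" "y \<le> s" using False assms s_def by auto
  have "x / s \<le> (x / s) powr t" "y / s \<le> (y / s) powr t"
    using powr_mono'[of t 1 "x / s"] powr_mono'[of t 1 "y / s"] assms s by auto
  then have "(x / s + y / s) * s powr t \<le> ((x / s) powr t + (y / s) powr t) * s powr t"
    by (intro mult_right_mono) auto
  moreover have "x / s + y / s = 1" using s s_def by (simp add: add_divide_distrib[symmetric])
  ultimately have "s powr t \<le> ((x / s) powr t + (y / s) powr t) * s powr t" by simp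
  also have "((x / s) powr t + (y / s) powr t) * s powr t = x powr t + y powr t"
    using s assms by (simp add: powr_divide distrib_right)
  finally show ?thesis using s_def by simp
qed

lemma abs_powr_diff_le:
  fixes a b t :: real
  assumes "0 < t" "t \<le> 1"
  shows "\<bar>\<bar>a\<bar> powr t - \<bar>b\<bar> powr t\<bar> \<le> \<bar>a - b\<bar> powr t"
proof -
  have *: "\<bar>x\<bar> powr t - \<bar>y\<bar> powr t \<le> \<bar>x - y\<bar> powr t" for x y :: real
  proof -
    have "\<bar>x\<bar> powr t \<le> (\<bar>y\<bar> + \<bar>x - y\<bar>) powr t"
      using assms by (intro powr_mono2) auto
    also have "\<dots> \<le> \<bar>y\<bar> powr t + \<bar>x - y\<bar> powr t"
      using assms by (intro powr_add_le_add_powr) auto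
    finally show ?thesis by simp
  qed
  show ?thesis using *[of a b] *[of b a] by (simp add: abs_minus_commute abs_le_iff)
qed

lemma abs_powr_le_one_plus_abs_powr:
  fixes u t p :: real
  assumes "0 \<le> t" "t \<le> p"
  shows "\<bar>u\<bar> powr t \<le> 1 + \<bar>u\<bar> powr p"
proof (cases "\<bar>u\<bar> \<le> 1")
  case True
  then have "\<bar>u\<bar> powr t \<le> 1" using assms powr_le1 by simp
  then show ?thesis by (smt (verit) powr_ge_zero)
next
  case False
  then have "\<bar>u\<bar> powr t \<le> \<bar>u\<bar> powr p" using assms by (intro powr_mono) auto
  then show ?thesis by simp
qed

lemma powr_add_le_two_powr:
  fixes a b q :: real
  assumes "0 \<le> a" "0 \<le> b" "0 < q"
  shows "(a + b) powr q \<le> 2 powr q * (a powr q + b powr q)"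
proof -
  have "(a + b) powr q \<le> (2 * max a b) powr q" using assms by (intro powr_mono2) auto
  also have "\<dots> = 2 powr q * max a b powr q" using assms by (simp add: powr_mult)
  also have "\<dots> \<le> 2 powr q * (a powr q + b powr q)"
    by (intro mult_left_mono) (auto simp: max_def)
  finally show ?thesis .
qed

lemma ennreal_le_mult_plus:
  fixes x a y b :: real
  assumes "x \<le> a * y + b" "0 \<le> a" "0 \<le> y" "0 \<le> b"
  shows "ennreal x \<le> ennreal a * ennreal y + ennreal b"
  using ennreal_leI[OF assms(1)] assms by (simp add: ennreal_plus ennreal_mult)

lemma divide_le_ennreal_iff:
  fixes a b c :: ennreal
  assumes "b \<noteq> 0" "b < \<infinity>"
  shows "a / b \<le> c \<longleftrightarrow> a \<le> c * b"
proof
  assume "a / b \<le> c"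
  then have "a / b * b \<le> c * b" by (rule mult_right_mono) simp
  then show "a \<le> c * b" using assms by (simp add: ennreal_divide_times mult_divide_eq_ennreal)
next
  assume "a \<le> c * b"
  then show "a / b \<le> c" using assms by (intro divide_le_posI_ennreal) (auto simp: mult.commute zero_less_iff_neq_zero)
qed

(* Each P n contains a dense open subset of the product space, cylinders being the basic open sets. *)
lemma Baire_cylinders:
  fixes P :: "nat \<Rightarrow> (nat \<Rightarrow> 'b) \<Rightarrow> bool"
  assumes dense_open: "\<And>n k \<epsilon>. \<exists>\<epsilon>' k'. k < k' \<and> (\<forall>i<k. \<epsilon>' i = \<epsilon> i) \<and>
      (\<forall>\<epsilon>''. (\<forall>i<k'. \<epsilon>'' i = \<epsilon>' i) \<longrightarrow> P n \<epsilon>'')"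
  shows "\<exists>\<epsilon>. \<forall>n. P n \<epsilon>"
proof -
  define Q where "Q n s s' \<longleftrightarrow> snd s < snd s' \<and> (\<forall>i<snd s. fst s' i = fst s i) \<and>
      (\<forall>\<epsilon>''. (\<forall>i<snd s'. \<epsilon>'' i = fst s' i) \<longrightarrow> P n \<epsilon>'')" for n and s s' :: "(nat \<Rightarrow> 'b) \<times> nat"
  have "\<exists>s. \<forall>n. True \<and> Q n (s n) (s (Suc n))"
  proof (rule dependent_nat_choice)
    fix x n
    obtain \<epsilon>' k' where "Q n x (\<epsilon>', k')"
      using dense_open[of "snd x" "fst x" n] unfolding Q_def by auto
    then show "\<exists>y. True \<and> Q n x y" by blast
  qed simp
  then obtain s where s: "\<And>n. Q n (s n) (s (Suc n))" by blast
  define e where "e n = fst (s n)" for n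
  define k where "k n = snd (s n)" for n
  have k_Suc: "k n < k (Suc n)" and e_Suc: "\<forall>i<k n. e (Suc n) i = e n i"
    and P_cyl: "\<And>\<epsilon>. \<forall>i<k (Suc n). \<epsilon> i = e (Suc n) i \<Longrightarrow> P n \<epsilon>" for n
    using s[of n] unfolding Q_def e_def k_def by auto
  have k_mono: "k n \<le> k m" if "n \<le> m" for n m
    using lift_Suc_mono_le[of k, OF less_imp_le[OF k_Suc] that] .
  have k_ge: "n < k (Suc n)" for n
  proof (induction n)
    case 0
    show ?case using k_Suc[of 0] by simp
  next
    case (Suc n)
    then show ?case using k_Suc[of "Suc n"] by simp
  qed
  have e_agree: "\<forall>i<k n. e m i = e n i" if "n \<le> m" for n m
    using that
  proof (induction m rule: dec_induct)
    case (step m)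
    then show ?case using e_Suc[of m] k_mono[of n m] by auto
  qed simp
  define \<epsilon> where "\<epsilon> i = e (Suc i) i" for i
  have "P n \<epsilon>" for n
  proof (rule P_cyl, intro allI impI)
    fix i assume i: "i < k (Suc n)"
    show "\<epsilon> i = e (Suc n) i"
    proof (cases "n \<le> i")
      case True
      then show ?thesis using e_agree[of "Suc n" "Suc i"] i unfolding \<epsilon>_def by auto
    next
      case False
      then show ?thesis using e_agree[of "Suc i" "Suc n"] k_ge[of i] unfolding \<epsilon>_def by auto
    qed
  qed
  then show ?thesis by blast
qed

definition shifted_powr :: "real \<Rightarrow> real \<Rightarrow> real \<Rightarrow> real" where
  "shifted_powr \<theta> c t = \<bar>t - c\<bar> powr \<theta> - \<bar>c\<bar> powr \<theta>"

definition switched_powr_term :: "real \<Rightarrow> (nat \<Rightarrow> real) \<Rightarrow> (nat \<Rightarrow> bool) \<Rightarrow> real \<Rightarrow> nat \<Rightarrow> real" where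
  "switched_powr_term \<theta> c \<epsilon> t i = (if \<epsilon> i then (1/2)^i * shifted_powr \<theta> (c i) t else 0)"

definition switched_powr_sum :: "real \<Rightarrow> (nat \<Rightarrow> real) \<Rightarrow> (nat \<Rightarrow> bool) \<Rightarrow> real \<Rightarrow> real" where
  "switched_powr_sum \<theta> c \<epsilon> t = (\<Sum>i. switched_powr_term \<theta> c \<epsilon> t i)"

lemma switched_powr_sum_zero [simp]: "switched_powr_sum \<theta> c \<epsilon> 0 = 0"
proof -
  have "switched_powr_term \<theta> c \<epsilon> 0 i = 0" for i
    by (simp add: switched_powr_term_def shifted_powr_def)
  then show ?thesis by (simp add: switched_powr_sum_def)
qed

lemma geometric_dominated_suminf:
  fixes a :: "nat \<Rightarrow> real"
  assumes "\<And>i. \<bar>a i\<bar> \<le> (1/2)^i * C"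
  shows "summable a" "\<bar>suminf a\<bar> \<le> 2 * C"
proof -
  have g: "summable (\<lambda>i. (1/2::real)^i * C)" by (intro summable_mult2 summable_geometric) simp
  have sa: "summable (\<lambda>i. \<bar>a i\<bar>)"
    using assms by (intro summable_comparison_test[OF _ g]) auto
  then show "summable a" using summable_norm_cancel[of a] by simp
  have "\<bar>suminf a\<bar> \<le> (\<Sum>i. \<bar>a i\<bar>)" using summable_norm[of a] sa by simp
  also have "\<dots> \<le> (\<Sum>i. (1/2::real)^i * C)" using assms by (intro suminf_le sa g) auto
  also have "\<dots> = 2 * C"
    using suminf_mult2[OF summable_geometric[of "1/2::real"], of C] suminf_geometric[of "1/2::real"]
    by simp
  finally show "\<bar>suminf a\<bar> \<le> 2 * C" .
qed

context
  fixes \<theta> :: real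
  assumes \<theta>_pos: "0 < \<theta>" and \<theta>_le_1: "\<theta> \<le> 1"
begin

lemma shifted_powr_holder: "\<bar>shifted_powr \<theta> c s - shifted_powr \<theta> c t\<bar> \<le> \<bar>s - t\<bar> powr \<theta>"
  using abs_powr_diff_le[OF \<theta>_pos \<theta>_le_1, of "s - c" "t - c"] unfolding shifted_powr_def by simp

lemma shifted_powr_bound: "\<bar>shifted_powr \<theta> c t\<bar> \<le> \<bar>t\<bar> powr \<theta>"
  using shifted_powr_holder[of c t 0] by (simp add: shifted_powr_def)

lemma switched_powr_term_bound: "\<bar>switched_powr_term \<theta> c \<epsilon> t i\<bar> \<le> (1/2)^i * \<bar>t\<bar> powr \<theta>"
  using shifted_powr_bound[of "c i" t]
  by (auto simp: switched_powr_term_def abs_mult intro: mult_left_mono)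

lemma switched_powr_sum_diff:
  "summable (\<lambda>i. switched_powr_term \<theta> c \<epsilon> s i - switched_powr_term \<theta> c \<epsilon>' t i)"
  "switched_powr_sum \<theta> c \<epsilon> s - switched_powr_sum \<theta> c \<epsilon>' t
     = (\<Sum>i. switched_powr_term \<theta> c \<epsilon> s i - switched_powr_term \<theta> c \<epsilon>' t i)"
  using geometric_dominated_suminf(1)[OF switched_powr_term_bound]
  unfolding switched_powr_sum_def by (auto intro: suminf_diff summable_diff)

lemma switched_powr_sum_holder:
  "\<bar>switched_powr_sum \<theta> c \<epsilon> s - switched_powr_sum \<theta> c \<epsilon> t\<bar> \<le> 2 * \<bar>s - t\<bar> powr \<theta>"
  unfolding switched_powr_sum_diff(2) switched_powr_term_def
  using shifted_powr_holder
  by (intro geometric_dominated_suminf(2))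
     (auto simp: abs_mult right_diff_distrib[symmetric] intro: mult_left_mono)

lemma switched_powr_sum_tail:
  assumes "\<And>i. i < k \<Longrightarrow> \<epsilon>' i = \<epsilon> i"
  shows "\<bar>switched_powr_sum \<theta> c \<epsilon>' t - switched_powr_sum \<theta> c \<epsilon> t\<bar> \<le> 2 * (1/2)^k * \<bar>t\<bar> powr \<theta>"
proof -
  define d where "d i = switched_powr_term \<theta> c \<epsilon>' t i - switched_powr_term \<theta> c \<epsilon> t i" for i
  have d_bound: "\<bar>d i\<bar> \<le> (1/2)^i * \<bar>t\<bar> powr \<theta>" for i
    unfolding d_def switched_powr_term_def using shifted_powr_bound[of "c i" t]
    by (auto simp: abs_mult intro: mult_left_mono)
  have "suminf d = (\<Sum>n. d (n + k)) + sum d {..<k}"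
    by (rule suminf_split_initial_segment) (unfold d_def, rule switched_powr_sum_diff(1))
  also have "sum d {..<k} = 0" using assms by (simp add: d_def switched_powr_term_def)
  finally have "suminf d = (\<Sum>n. d (n + k))" by simp
  moreover have "\<bar>\<Sum>n. d (n + k)\<bar> \<le> 2 * ((1/2)^k * \<bar>t\<bar> powr \<theta>)"
  proof (rule geometric_dominated_suminf(2))
    show "\<bar>d (n + k)\<bar> \<le> (1/2)^n * ((1/2)^k * \<bar>t\<bar> powr \<theta>)" for n
      using d_bound[of "n + k"] by (simp add: power_add mult_ac)
  qed
  ultimately show ?thesis unfolding switched_powr_sum_diff(2) d_def by (simp add: mult_ac)
qed

lemma switched_powr_sum_flip:
  "switched_powr_sum \<theta> c (\<epsilon>(j := True)) t - switched_powr_sum \<theta> c (\<epsilon>(j := False)) t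
     = (1/2)^j * shifted_powr \<theta> (c j) t"
proof -
  have "(\<lambda>i. switched_powr_term \<theta> c (\<epsilon>(j := True)) t i - switched_powr_term \<theta> c (\<epsilon>(j := False)) t i)
      = (\<lambda>i. if i = j then (1/2)^j * shifted_powr \<theta> (c j) t else 0)"
    by (auto simp: switched_powr_term_def)
  then show ?thesis unfolding switched_powr_sum_diff(2) by (simp add: sums_unique[OF sums_single, symmetric])
qed

end

lemma switched_powr_sum_measurable [measurable]:
  "switched_powr_sum \<theta> c \<epsilon> \<in> borel_measurable borel"
  unfolding switched_powr_sum_def switched_powr_term_def shifted_powr_def
  by (intro borel_measurable_suminf) measurable

definition bmo_pow_real :: "real \<Rightarrow> 'a::metric_space measure \<Rightarrow> ('a \<Rightarrow> real) \<Rightarrow> real" where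
  "bmo_pow_real q M f = enn2real (bmo_pow q M f)"

definition osc_integral :: "real \<Rightarrow> 'a::metric_space measure \<Rightarrow> ('a \<Rightarrow> real) \<Rightarrow> 'a set \<Rightarrow> ennreal" where
  "osc_integral q M f B = (\<integral>\<^sup>+ y. indicator B y * ennreal (\<bar>f y - ball_avg M f B\<bar> powr q) \<partial>M)"

lemma admissible_ballD:
  assumes "B \<in> admissible_balls M"
  shows "emeasure M B \<noteq> 0" "emeasure M B < \<infinity>" "emeasure M B = ennreal (measure M B)"
    "0 < measure M B"
proof -
  show nz: "emeasure M B \<noteq> 0" and fin: "emeasure M B < \<infinity>"
    using assms unfolding admissible_balls_def by auto
  then show eq: "emeasure M B = ennreal (measure M B)" by (simp add: emeasure_eq_ennreal_measure)
  show "0 < measure M B" using nz eq by (simp add: measure_nonneg order_less_le)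
qed

lemma bmo_pow_le_iff:
  "bmo_pow q M f \<le> C \<longleftrightarrow> (\<forall>B\<in>admissible_balls M. osc_integral q M f B \<le> C * emeasure M B)"
  unfolding bmo_pow_def osc_integral_def[symmetric] SUP_le_iff
  by (intro ball_cong refl divide_le_ennreal_iff admissible_ballD(1,2))

lemma less_bmo_pow_iff:
  "C < bmo_pow q M f \<longleftrightarrow> (\<exists>B\<in>admissible_balls M. C * emeasure M B < osc_integral q M f B)"
  using bmo_pow_le_iff[of q M f C] by (auto simp: not_le[symmetric])

lemma osc_integral_le_bmo_pow:
  "B \<in> admissible_balls M \<Longrightarrow> osc_integral q M f B \<le> bmo_pow q M f * emeasure M B"
  using bmo_pow_le_iff[of q M f "bmo_pow q M f"] by simp

lemma osc_integral_le_BMO: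
  assumes "f \<in> BMO M q" "B \<in> admissible_balls M"
  shows "osc_integral q M f B \<le> ennreal (bmo_pow_real q M f) * emeasure M B"
  using osc_integral_le_bmo_pow[OF assms(2)] assms(1) unfolding BMO_def bmo_pow_real_def
  by (simp add: less_top)

lemma in_BMO_if_osc_integral_le:
  assumes "loc_integrable M f"
    and "\<And>B. B \<in> admissible_balls M \<Longrightarrow> osc_integral q M f B \<le> ennreal C * emeasure M B"
  shows "f \<in> BMO M q"
proof -
  have "bmo_pow q M f \<le> ennreal C" using assms(2) by (simp add: bmo_pow_le_iff)
  then show ?thesis using assms(1) unfolding BMO_def by (simp add: le_less_trans)
qed

lemma set_integrable_const_admissible:
  assumes "B \<in> admissible_balls M" "B \<in> sets M"
  shows "set_integrable M B (\<lambda>_. c::real)"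
  using admissible_ballD[OF assms(1)] assms(2) unfolding set_integrable_def
  by (intro integrable_scaleR_left) auto

lemma ball_avg_add_const:
  assumes "B \<in> admissible_balls M" "B \<in> sets M" "set_integrable M B v"
  shows "ball_avg M (\<lambda>x. v x + c) B = ball_avg M v B + c"
proof -
  have "(LINT x:B|M. v x + c) = (LINT x:B|M. v x) + measure M B * c"
    using set_integral_add(2)[OF assms(3) set_integrable_const_admissible[OF assms(1,2)]]
      set_integral_const[of B M c] admissible_ballD(2)[OF assms(1)] assms(2) by simp
  then show ?thesis using admissible_ballD(4)[OF assms(1)] unfolding ball_avg_def
    by (simp add: field_simps)
qed

lemma ball_avg_diff:
  assumes "set_integrable M B v" "set_integrable M B w"
  shows "ball_avg M (\<lambda>x. v x - w x) B = ball_avg M v B - ball_avg M w B"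
  using set_integral_diff(2)[OF assms] unfolding ball_avg_def by (simp add: diff_divide_distrib)

lemma ball_avg_cmult: "ball_avg M (\<lambda>x. a * v x) B = a * ball_avg M v B"
  unfolding ball_avg_def by simp

lemma abs_ball_avg_le:
  assumes B: "B \<in> admissible_balls M" and w: "set_integrable M B w" and C: "0 \<le> C"
    and bound: "(\<integral>\<^sup>+ y. indicator B y * ennreal \<bar>w y\<bar> \<partial>M) \<le> ennreal C * emeasure M B"
  shows "\<bar>ball_avg M w B\<bar> \<le> C"
proof -
  have "ennreal \<bar>LINT x:B|M. w x\<bar> \<le> (\<integral>\<^sup>+ x. ennreal (norm (indicator B x *\<^sub>R w x)) \<partial>M)"
    using integral_norm_bound_ennreal[OF w[unfolded set_integrable_def]]
    unfolding set_lebesgue_integral_def by simp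
  also have "\<dots> = (\<integral>\<^sup>+ y. indicator B y * ennreal \<bar>w y\<bar> \<partial>M)"
    by (intro nn_integral_cong) (auto split: split_indicator)
  also have "\<dots> \<le> ennreal (C * measure M B)"
    using bound admissible_ballD(3)[OF B] C by (simp add: ennreal_mult)
  finally have "\<bar>LINT x:B|M. w x\<bar> \<le> C * measure M B"
    using C admissible_ballD(4)[OF B] by (subst (asm) ennreal_le_iff) auto
  then show ?thesis using admissible_ballD(4)[OF B] unfolding ball_avg_def
    by (simp add: divide_le_eq abs_divide)
qed

lemma nn_integral_indicator_le_affine:
  assumes [measurable]: "B \<in> sets M" "F \<in> borel_measurable M" "G \<in> borel_measurable M"
    and le: "\<And>y. y \<in> B \<Longrightarrow> F y \<le> a * G y + b"
  shows "(\<integral>\<^sup>+ y. indicator B y * F y \<partial>M)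
    \<le> a * (\<integral>\<^sup>+ y. indicator B y * G y \<partial>M) + b * emeasure M B"
proof -
  have "(\<integral>\<^sup>+ y. indicator B y * F y \<partial>M)
      \<le> (\<integral>\<^sup>+ y. a * (indicator B y * G y) + b * indicator B y \<partial>M)"
    using le by (intro nn_integral_mono) (auto split: split_indicator)
  also have "\<dots> = a * (\<integral>\<^sup>+ y. indicator B y * G y \<partial>M) + b * emeasure M B"
    by (simp add: nn_integral_add nn_integral_cmult nn_integral_cmult_indicator)
  finally show ?thesis .
qed

lemma loc_integrable_measurable: "loc_integrable M f \<Longrightarrow> f \<in> borel_measurable M"
  unfolding loc_integrable_def by auto

lemma loc_integrable_set_integrable:
  "loc_integrable M f \<Longrightarrow> B \<in> admissible_balls M \<Longrightarrow> set_integrable M B f"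
  unfolding loc_integrable_def admissible_balls_def by auto

context
  fixes M :: "'a::metric_space measure"
  assumes sets_M: "sets M = sets borel"
begin

lemma admissible_ball_sets: "B \<in> admissible_balls M \<Longrightarrow> B \<in> sets M"
  unfolding admissible_balls_def sets_M by auto

lemma osc_integral_scaled_diff_le:
  assumes B: "B \<in> admissible_balls M" and "0 < a" "0 < q"
    and [measurable]: "h1 \<in> borel_measurable M" "h0 \<in> borel_measurable M"
    and "set_integrable M B h1" "set_integrable M B h0"
    and diff: "\<And>x. h1 x - h0 x = a * g x"
  shows "osc_integral q M g B \<le> ennreal ((2 / a) powr q) * (osc_integral q M h1 B + osc_integral q M h0 B)"
proof -
  have [measurable]: "B \<in> sets M" using B by (rule admissible_ball_sets)
  define u1 where "u1 y = \<bar>h1 y - ball_avg M h1 B\<bar>" for y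
  define u0 where "u0 y = \<bar>h0 y - ball_avg M h0 B\<bar>" for y
  have g_eq: "g = (\<lambda>x. (1 / a) * (h1 x - h0 x))" using diff \<open>0 < a\<close> by auto
  have "g y - ball_avg M g B = (1 / a) * ((h1 y - ball_avg M h1 B) - (h0 y - ball_avg M h0 B))" for y
    unfolding g_eq ball_avg_cmult ball_avg_diff[OF assms(6,7)] by (simp add: algebra_simps)
  then have "\<bar>g y - ball_avg M g B\<bar> \<le> (1 / a) * (u1 y + u0 y)" for y
    unfolding u1_def u0_def using \<open>0 < a\<close>
      abs_triangle_ineq4[of "h1 y - ball_avg M h1 B" "h0 y - ball_avg M h0 B"]
    by (simp add: abs_mult divide_right_mono)
  then have "\<bar>g y - ball_avg M g B\<bar> powr q \<le> ((1 / a) * (u1 y + u0 y)) powr q" for y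
    using \<open>0 < q\<close> by (intro powr_mono2) auto
  also have "((1 / a) * (u1 y + u0 y)) powr q \<le> (2 / a) powr q * (u1 y powr q + u0 y powr q)" for y
  proof -
    have "((1 / a) * (u1 y + u0 y)) powr q = (1 / a) powr q * (u1 y + u0 y) powr q"
      using \<open>0 < a\<close> unfolding u1_def u0_def by (simp add: powr_divide)
    also have "\<dots> \<le> (1 / a) powr q * (2 powr q * (u1 y powr q + u0 y powr q))"
      using \<open>0 < q\<close> unfolding u1_def u0_def by (intro mult_left_mono powr_add_le_two_powr) auto
    also have "\<dots> = (2 / a) powr q * (u1 y powr q + u0 y powr q)"
      using \<open>0 < a\<close> by (simp add: powr_divide)
    finally show ?thesis .
  qed
  finally have "\<bar>g y - ball_avg M g B\<bar> powr q
      \<le> (2 / a) powr q * u1 y powr q + (2 / a) powr q * u0 y powr q" for y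
    by (simp add: distrib_left)
  then have pointwise: "ennreal (\<bar>g y - ball_avg M g B\<bar> powr q)
      \<le> ennreal ((2 / a) powr q) * ennreal (u1 y powr q) + ennreal ((2 / a) powr q) * ennreal (u0 y powr q)" for y
    using ennreal_leI by (fastforce simp: ennreal_plus ennreal_mult)
  have "osc_integral q M g B \<le> (\<integral>\<^sup>+ y. ennreal ((2 / a) powr q) * (indicator B y * ennreal (u1 y powr q))
      + ennreal ((2 / a) powr q) * (indicator B y * ennreal (u0 y powr q)) \<partial>M)"
    unfolding osc_integral_def using pointwise
    by (intro nn_integral_mono) (auto split: split_indicator)
  also have "\<dots> = ennreal ((2 / a) powr q) * (osc_integral q M h1 B + osc_integral q M h0 B)"
    unfolding osc_integral_def u1_def u0_def
    by (simp add: nn_integral_add nn_integral_cmult distrib_left)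
  finally show ?thesis .
qed

lemma osc_integral_le_liminf:
  assumes B: "B \<in> admissible_balls M" and "0 < q"
    and [measurable]: "\<And>k. h k \<in> borel_measurable M" "h0 \<in> borel_measurable M"
    and w: "set_integrable M B w"
    and dom: "\<And>k x. x \<in> B \<Longrightarrow> \<bar>h k x\<bar> \<le> w x"
    and lim: "\<And>x. x \<in> B \<Longrightarrow> (\<lambda>k. h k x) \<longlonglongrightarrow> h0 x"
  shows "osc_integral q M h0 B \<le> liminf (\<lambda>k. osc_integral q M (h k) B)"
proof -
  have [measurable]: "B \<in> sets M" using B by (rule admissible_ball_sets)
  have "(\<lambda>k. LINT x:B|M. h k x) \<longlonglongrightarrow> (LINT x:B|M. h0 x)"
    unfolding set_lebesgue_integral_def
  proof (rule integral_dominated_convergence[where w = "\<lambda>x. indicator B x *\<^sub>R w x"])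
    show "integrable M (\<lambda>x. indicator B x *\<^sub>R w x)" using w by (simp add: set_integrable_def)
    show "AE x in M. (\<lambda>k. indicator B x *\<^sub>R h k x) \<longlonglongrightarrow> indicator B x *\<^sub>R h0 x"
      using lim by (auto intro!: AE_I2 split: split_indicator)
    show "AE x in M. norm (indicator B x *\<^sub>R h k x) \<le> indicator B x *\<^sub>R w x" for k
      using dom by (auto intro!: AE_I2 split: split_indicator)
  qed measurable
  then have avg: "(\<lambda>k. ball_avg M (h k) B) \<longlonglongrightarrow> ball_avg M h0 B"
    unfolding ball_avg_def by (intro tendsto_divide tendsto_const) (use admissible_ballD(4)[OF B] in auto)
  have pointwise: "(\<lambda>k. indicator B y * ennreal (\<bar>h k y - ball_avg M (h k) B\<bar> powr q))
      \<longlonglongrightarrow> indicator B y * ennreal (\<bar>h0 y - ball_avg M h0 B\<bar> powr q)" for y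
    using lim[of y] avg \<open>0 < q\<close> by (cases "y \<in> B") (auto intro!: tendsto_intros)
  have "osc_integral q M h0 B
      = (\<integral>\<^sup>+ y. liminf (\<lambda>k. indicator B y * ennreal (\<bar>h k y - ball_avg M (h k) B\<bar> powr q)) \<partial>M)"
    unfolding osc_integral_def lim_imp_Liminf[OF trivial_limit_sequentially pointwise] ..
  also have "\<dots> \<le> liminf (\<lambda>k. osc_integral q M (h k) B)"
    unfolding osc_integral_def by (rule nn_integral_liminf) measurable
  finally show ?thesis .
qed

lemma BMO_antimono:
  assumes "0 \<le> q1" "q1 \<le> q2"
  shows "BMO M q2 \<subseteq> BMO M q1"
proof
  fix v assume v: "v \<in> BMO M q2"
  then have li: "loc_integrable M v" unfolding BMO_def by auto
  then have [measurable]: "v \<in> borel_measurable M" by (rule loc_integrable_measurable)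
  define C where "C = bmo_pow_real q2 M v"
  show "v \<in> BMO M q1"
  proof (rule in_BMO_if_osc_integral_le[OF li])
    fix B assume B: "B \<in> admissible_balls M"
    then have [measurable]: "B \<in> sets M" by (rule admissible_ball_sets)
    have "osc_integral q1 M v B \<le> 1 * osc_integral q2 M v B + 1 * emeasure M B"
      unfolding osc_integral_def
    proof (rule nn_integral_indicator_le_affine)
      fix y assume "y \<in> B"
      have "\<bar>v y - ball_avg M v B\<bar> powr q1 \<le> 1 * \<bar>v y - ball_avg M v B\<bar> powr q2 + 1"
        using abs_powr_le_one_plus_abs_powr[of q1 q2] assms by (simp add: add.commute)
      from ennreal_le_mult_plus[OF this] show "ennreal (\<bar>v y - ball_avg M v B\<bar> powr q1)
          \<le> 1 * ennreal (\<bar>v y - ball_avg M v B\<bar> powr q2) + 1"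
        by simp
    qed measurable
    also have "\<dots> \<le> ennreal C * emeasure M B + 1 * emeasure M B"
      using osc_integral_le_BMO[OF v B] unfolding C_def by (intro add_mono) auto
    also have "\<dots> = ennreal (C + 1) * emeasure M B"
      unfolding C_def bmo_pow_real_def by (simp add: distrib_right ennreal_plus)
    finally show "osc_integral q1 M v B \<le> ennreal (C + 1) * emeasure M B" .
  qed
qed

end

(* The factors come from osc_integral_le_shifted_powr and from osc_integral_scaled_diff_le
   with a = (1/2)^j. *)
definition flip_threshold :: "real \<Rightarrow> real \<Rightarrow> nat \<Rightarrow> ennreal" where
  "flip_threshold q N j = ennreal (2 powr q) * (2 * of_nat j * ennreal ((2 / (1/2)^j) powr q)
    + ennreal ((1 + N) powr q))"

context
  fixes M :: "'a::metric_space measure" and f :: "'a \<Rightarrow> real" and p \<theta> :: real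
  assumes sets_M: "sets M = sets borel" and f_BMO: "f \<in> BMO M p"
    and \<theta>_pos: "0 < \<theta>" and \<theta>_le_1: "\<theta> \<le> 1" and \<theta>_le_p: "\<theta> \<le> p"
begin

lemma f_loc_integrable: "loc_integrable M f"
  using f_BMO unfolding BMO_def by auto

lemma f_measurable [measurable]: "f \<in> borel_measurable M"
  using f_loc_integrable by (rule loc_integrable_measurable)

lemma abs_ball_avg_le_bmo_pow_real:
  assumes B: "B \<in> admissible_balls M" and w: "set_integrable M B w" and K: "0 \<le> K"
    and [measurable]: "w \<in> borel_measurable M"
    and bound: "\<And>y. y \<in> B \<Longrightarrow> \<bar>w y\<bar> \<le> K * \<bar>f y - ball_avg M f B\<bar> powr \<theta>"
  shows "\<bar>ball_avg M w B\<bar> \<le> K * (1 + bmo_pow_real p M f)"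
proof (rule abs_ball_avg_le[OF B w])
  define N where "N = bmo_pow_real p M f"
  have [measurable]: "B \<in> sets M" using admissible_ball_sets[OF sets_M B] .
  have "(\<integral>\<^sup>+ y. indicator B y * ennreal \<bar>w y\<bar> \<partial>M)
      \<le> ennreal K * osc_integral p M f B + ennreal K * emeasure M B"
    unfolding osc_integral_def
  proof (rule nn_integral_indicator_le_affine)
    fix y assume "y \<in> B"
    then have "\<bar>w y\<bar> \<le> K * (1 + \<bar>f y - ball_avg M f B\<bar> powr p)"
      using bound abs_powr_le_one_plus_abs_powr[of \<theta> p] \<theta>_pos \<theta>_le_p K
      by (meson less_imp_le mult_left_mono order_trans)
    then show "ennreal \<bar>w y\<bar> \<le> ennreal K * ennreal (\<bar>f y - ball_avg M f B\<bar> powr p) + ennreal K"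
      using K by (intro ennreal_le_mult_plus) (auto simp: algebra_simps)
  qed measurable
  also have "\<dots> \<le> ennreal K * (ennreal N * emeasure M B) + ennreal K * emeasure M B"
    using osc_integral_le_BMO[OF f_BMO B] unfolding N_def by (intro add_mono mult_left_mono) auto
  also have "\<dots> = ennreal (K * (1 + N)) * emeasure M B"
    using K by (simp add: N_def bmo_pow_real_def ennreal_mult ennreal_plus algebra_simps)
  finally show "(\<integral>\<^sup>+ y. indicator B y * ennreal \<bar>w y\<bar> \<partial>M) \<le> ennreal (K * (1 + N)) * emeasure M B" .
qed (use K in \<open>simp add: bmo_pow_real_def\<close>)

lemma holder_comp_in_BMO:
  assumes [measurable]: "\<Phi> \<in> borel_measurable borel" and K: "0 \<le> K"
    and holder: "\<And>s t. \<bar>\<Phi> s - \<Phi> t\<bar> \<le> K * \<bar>s - t\<bar> powr \<theta>"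
  shows "(\<lambda>x. \<Phi> (f x)) \<in> BMO M (p / \<theta>)"
proof -
  define q where "q = p / \<theta>"
  have q: "0 < q" "\<theta> * q = p" using \<theta>_pos \<theta>_le_p unfolding q_def by auto
  have growth: "\<bar>\<Phi> t\<bar> \<le> \<bar>\<Phi> 0\<bar> + K * (1 + \<bar>t\<bar>)" for t
  proof -
    have "\<bar>\<Phi> t\<bar> \<le> \<bar>\<Phi> 0\<bar> + K * \<bar>t\<bar> powr \<theta>" using holder[of t 0] by simp
    also have "\<bar>t\<bar> powr \<theta> \<le> 1 + \<bar>t\<bar> powr 1"
      using \<theta>_pos \<theta>_le_1 by (intro abs_powr_le_one_plus_abs_powr) auto
    finally show ?thesis using K by (simp add: mult_left_mono)
  qed
  have li: "loc_integrable M (\<lambda>x. \<Phi> (f x))"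
    unfolding loc_integrable_def
  proof (intro conjI allI impI)
    show "(\<lambda>x. \<Phi> (f x)) \<in> borel_measurable M" by measurable
    fix x r assume fin: "emeasure M (ball x r) < \<infinity>"
    have [measurable]: "ball x r \<in> sets M" by (simp add: sets_M)
    have "set_integrable M (ball x r) (\<lambda>_. 1::real)" "set_integrable M (ball x r) f"
      using fin f_loc_integrable unfolding loc_integrable_def set_integrable_def
      by (auto intro: integrable_scaleR_left)
    then have "set_integrable M (ball x r) (\<lambda>y. \<bar>\<Phi> 0\<bar> * 1 + K * (1 + \<bar>f y\<bar>))"
      by (intro set_integral_add set_integrable_mult_right set_integrable_abs) auto
    then show "set_integrable M (ball x r) (\<lambda>y. \<Phi> (f y))"
      by (rule set_integrable_bound) (use growth K in \<open>auto simp: set_borel_measurable_def\<close>)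
  qed
  define N where "N = bmo_pow_real p M f"
  define A where "A = 2 powr q * K powr q"
  define D where "D = 2 powr q * (K * (1 + N)) powr q"
  show ?thesis unfolding q_def[symmetric]
  proof (rule in_BMO_if_osc_integral_le[OF li])
    fix B assume B: "B \<in> admissible_balls M"
    have [measurable]: "B \<in> sets M" using admissible_ball_sets[OF sets_M B] .
    define c where "c = ball_avg M f B"
    define w where "w y = \<Phi> (f y) - \<Phi> c" for y
    have [measurable]: "w \<in> borel_measurable M" unfolding w_def by measurable
    have w_int: "set_integrable M B w"
      unfolding w_def using loc_integrable_set_integrable[OF li B]
        set_integrable_const_admissible[OF B, of "\<Phi> c"]
      by (intro set_integral_diff) auto
    have w_bound: "\<bar>w y\<bar> \<le> K * \<bar>f y - c\<bar> powr \<theta>" for y unfolding w_def using holder by simp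
    have avg_w: "\<bar>ball_avg M w B\<bar> \<le> K * (1 + N)"
      unfolding N_def using w_bound c_def by (intro abs_ball_avg_le_bmo_pow_real[OF B w_int K]) auto
    have "ball_avg M (\<lambda>y. w y + \<Phi> c) B = ball_avg M w B + \<Phi> c"
      by (rule ball_avg_add_const[OF B _ w_int]) simp
    then have avg_eq: "ball_avg M (\<lambda>y. \<Phi> (f y)) B = ball_avg M w B + \<Phi> c"
      by (simp add: w_def)
    have "\<bar>\<Phi> (f y) - ball_avg M (\<lambda>y. \<Phi> (f y)) B\<bar> powr q \<le> A * \<bar>f y - c\<bar> powr p + D" for y
    proof -
      have "\<bar>\<Phi> (f y) - ball_avg M (\<lambda>y. \<Phi> (f y)) B\<bar> \<le> K * \<bar>f y - c\<bar> powr \<theta> + K * (1 + N)"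
        using w_bound[of y] avg_w unfolding avg_eq w_def by linarith
      then have "\<bar>\<Phi> (f y) - ball_avg M (\<lambda>y. \<Phi> (f y)) B\<bar> powr q
          \<le> (K * \<bar>f y - c\<bar> powr \<theta> + K * (1 + N)) powr q"
        using q by (intro powr_mono2) auto
      also have "\<dots> \<le> 2 powr q * ((K * \<bar>f y - c\<bar> powr \<theta>) powr q + (K * (1 + N)) powr q)"
        using K q by (intro powr_add_le_two_powr) (auto simp: N_def bmo_pow_real_def)
      also have "(K * \<bar>f y - c\<bar> powr \<theta>) powr q = K powr q * \<bar>f y - c\<bar> powr p"
        using K q by (simp add: powr_mult powr_powr)
      finally show ?thesis unfolding A_def D_def by (simp add: algebra_simps)
    qed
    then have "osc_integral q M (\<lambda>x. \<Phi> (f x)) B \<le> ennreal A * osc_integral p M f B + ennreal D * emeasure M B"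
      unfolding osc_integral_def c_def
      by (intro nn_integral_indicator_le_affine ennreal_le_mult_plus)
         (auto simp: A_def D_def N_def bmo_pow_real_def)
    also have "\<dots> \<le> ennreal A * (ennreal N * emeasure M B) + ennreal D * emeasure M B"
      using osc_integral_le_BMO[OF f_BMO B] unfolding N_def by (intro add_mono mult_left_mono) auto
    also have "\<dots> = ennreal (A * N + D) * emeasure M B"
      by (simp add: A_def D_def N_def bmo_pow_real_def ennreal_mult ennreal_plus algebra_simps)
    finally show "osc_integral q M (\<lambda>x. \<Phi> (f x)) B \<le> ennreal (A * N + D) * emeasure M B" .
  qed
qed

lemma osc_integral_le_shifted_powr:
  assumes B: "B \<in> admissible_balls M" and q: "0 < q"
  shows "osc_integral (\<theta> * q) M f B
    \<le> ennreal (2 powr q) * (osc_integral q M (\<lambda>x. shifted_powr \<theta> (ball_avg M f B) (f x)) B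
      + ennreal ((1 + bmo_pow_real p M f) powr q) * emeasure M B)"
proof -
  have [measurable]: "B \<in> sets M" using admissible_ball_sets[OF sets_M B] .
  define N where "N = bmo_pow_real p M f"
  define c where "c = ball_avg M f B"
  define g where "g = (\<lambda>x. shifted_powr \<theta> c (f x))"
  define v where "v x = \<bar>f x - c\<bar> powr \<theta>" for x
  have [measurable]: "g \<in> borel_measurable M" "v \<in> borel_measurable M"
    unfolding g_def v_def shifted_powr_def by measurable
  have "g \<in> BMO M (p / \<theta>)"
    unfolding g_def using shifted_powr_holder[OF \<theta>_pos \<theta>_le_1]
    by (intro holder_comp_in_BMO[of _ 1]) (auto simp: shifted_powr_def)
  then have g_int: "set_integrable M B g"
    using B loc_integrable_set_integrable unfolding BMO_def by blast
  have v_eq: "v = (\<lambda>x. g x + \<bar>c\<bar> powr \<theta>)" unfolding v_def g_def shifted_powr_def by auto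
  have avg_v: "ball_avg M v B = ball_avg M g B + \<bar>c\<bar> powr \<theta>"
    unfolding v_eq by (rule ball_avg_add_const[OF B _ g_int]) simp
  have "set_integrable M B v"
    unfolding v_eq using g_int set_integrable_const_admissible[OF B]
    by (intro set_integral_add) auto
  then have "\<bar>ball_avg M v B\<bar> \<le> 1 * (1 + N)"
    unfolding N_def by (rule abs_ball_avg_le_bmo_pow_real[OF B]) (auto simp: v_def c_def)
  then have "v y \<le> \<bar>g y - ball_avg M g B\<bar> + (1 + N)" for y
    using avg_v v_eq by (simp add: fun_eq_iff)
  then have "\<bar>f y - c\<bar> powr (\<theta> * q) \<le> (\<bar>g y - ball_avg M g B\<bar> + (1 + N)) powr q" for y
    using q \<theta>_pos by (simp add: v_def powr_powr[symmetric] powr_mono2)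
  also have "\<dots> y \<le> 2 powr q * \<bar>g y - ball_avg M g B\<bar> powr q + 2 powr q * (1 + N) powr q" for y
    using powr_add_le_two_powr[of "\<bar>g y - ball_avg M g B\<bar>" "1 + N" q] q
    by (simp add: N_def bmo_pow_real_def distrib_left)
  finally have "osc_integral (\<theta> * q) M f B
      \<le> ennreal (2 powr q) * osc_integral q M g B + ennreal (2 powr q * (1 + N) powr q) * emeasure M B"
    unfolding osc_integral_def c_def[symmetric]
    by (intro nn_integral_indicator_le_affine ennreal_le_mult_plus) (auto simp: N_def bmo_pow_real_def)
  then show ?thesis
    by (simp add: g_def c_def N_def bmo_pow_real_def ennreal_mult distrib_left mult.assoc)
qed

abbreviation switched_comp :: "(nat \<Rightarrow> real) \<Rightarrow> (nat \<Rightarrow> bool) \<Rightarrow> 'a \<Rightarrow> real" where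
  "switched_comp c \<epsilon> \<equiv> (\<lambda>x. switched_powr_sum \<theta> c \<epsilon> (f x))"

lemma switched_comp_in_BMO: "switched_comp c \<epsilon> \<in> BMO M (p / \<theta>)"
  using switched_powr_sum_holder[OF \<theta>_pos \<theta>_le_1] by (intro holder_comp_in_BMO[where K = 2]) auto

lemma switched_comp_set_integrable:
  "B \<in> admissible_balls M \<Longrightarrow> set_integrable M B (switched_comp c \<epsilon>)"
  using switched_comp_in_BMO loc_integrable_set_integrable unfolding BMO_def by blast

lemma switched_comp_flip_osc:
  assumes B: "B \<in> admissible_balls M" and q: "0 < q" and c_j: "c j = ball_avg M f B"
    and large: "flip_threshold q (bmo_pow_real p M f) j * emeasure M B < osc_integral (\<theta> * q) M f B"
  shows "\<exists>b. of_nat j * emeasure M B < osc_integral q M (switched_comp c (\<epsilon>(j := b))) B"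
proof (rule ccontr)
  define P where "P = ennreal ((2 / (1/2)^j) powr q)"
  define R where "R = ennreal ((1 + bmo_pow_real p M f) powr q)"
  assume "\<not> ?thesis"
  then have small: "osc_integral q M (switched_comp c (\<epsilon>(j := b))) B \<le> of_nat j * emeasure M B" for b
    by (simp add: not_less)
  have "osc_integral q M (\<lambda>x. shifted_powr \<theta> (c j) (f x)) B
      \<le> P * (osc_integral q M (switched_comp c (\<epsilon>(j := True))) B
        + osc_integral q M (switched_comp c (\<epsilon>(j := False))) B)"
    unfolding P_def
    by (intro osc_integral_scaled_diff_le[OF sets_M B _ q] switched_comp_set_integrable[OF B]
        switched_powr_sum_flip[OF \<theta>_pos \<theta>_le_1]) auto
  also have "\<dots> \<le> P * (of_nat j * emeasure M B + of_nat j * emeasure M B)"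
    using small by (intro mult_left_mono add_mono) auto
  finally have "osc_integral (\<theta> * q) M f B
      \<le> ennreal (2 powr q) * (P * (of_nat j * emeasure M B + of_nat j * emeasure M B) + R * emeasure M B)"
    using osc_integral_le_shifted_powr[OF B q] unfolding c_j R_def
    by (meson add_right_mono mult_left_mono order_trans zero_le)
  also have "\<dots> = ennreal (2 powr q) * (2 * of_nat j * P + R) * emeasure M B"
    by (simp add: mult_2 ring_distribs mult_ac)
  finally show False using large unfolding P_def R_def flip_threshold_def by simp
qed

lemma switched_comp_osc_open:
  assumes B: "B \<in> admissible_balls M" and q: "0 < q"
    and large: "r * emeasure M B < osc_integral q M (switched_comp c \<epsilon>) B"
  shows "\<exists>k. \<forall>\<epsilon>'. (\<forall>i<k. \<epsilon>' i = \<epsilon> i) \<longrightarrow> r * emeasure M B < osc_integral q M (switched_comp c \<epsilon>') B"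
proof (rule ccontr)
  assume "\<not> ?thesis"
  then obtain E where E_agree: "\<And>k i. i < k \<Longrightarrow> E k i = \<epsilon> i"
    and E_small: "\<And>k. osc_integral q M (switched_comp c (E k)) B \<le> r * emeasure M B"
    by (metis not_less)
  have "set_integrable M B (\<lambda>_. 1::real)" "set_integrable M B f"
    using set_integrable_const_admissible[OF B admissible_ball_sets[OF sets_M B]]
      loc_integrable_set_integrable[OF f_loc_integrable B] by auto
  then have dominant: "set_integrable M B (\<lambda>x. 2 * (1 + \<bar>f x\<bar>))"
    by (intro set_integrable_mult_right set_integral_add set_integrable_abs)
  have "\<bar>switched_powr_sum \<theta> c \<epsilon>' t\<bar> \<le> 2 * (1 + \<bar>t\<bar>)" for \<epsilon>' t
  proof -
    have "\<bar>switched_powr_sum \<theta> c \<epsilon>' t\<bar> \<le> 2 * \<bar>t\<bar> powr \<theta>"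
      using switched_powr_sum_holder[OF \<theta>_pos \<theta>_le_1, of c \<epsilon>' t 0] by simp
    also have "\<bar>t\<bar> powr \<theta> \<le> 1 + \<bar>t\<bar> powr 1"
      using \<theta>_pos \<theta>_le_1 by (intro abs_powr_le_one_plus_abs_powr) auto
    finally show ?thesis by simp
  qed
  moreover have "(\<lambda>k. switched_powr_sum \<theta> c (E k) t) \<longlonglongrightarrow> switched_powr_sum \<theta> c \<epsilon> t" for t
  proof (rule LIM_zero_cancel, rule Lim_null_comparison)
    show "\<forall>\<^sub>F k in sequentially. norm (switched_powr_sum \<theta> c (E k) t - switched_powr_sum \<theta> c \<epsilon> t)
        \<le> 2 * (1/2)^k * \<bar>t\<bar> powr \<theta>"
      using switched_powr_sum_tail[OF \<theta>_pos \<theta>_le_1] E_agree by (auto intro!: always_eventually)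
    show "(\<lambda>k. 2 * (1/2::real)^k * \<bar>t\<bar> powr \<theta>) \<longlonglongrightarrow> 0"
      by (intro tendsto_mult_left_zero tendsto_mult_right_zero LIMSEQ_power_zero) auto
  qed
  ultimately have "osc_integral q M (switched_comp c \<epsilon>) B
      \<le> liminf (\<lambda>k. osc_integral q M (switched_comp c (E k)) B)"
    by (intro osc_integral_le_liminf[OF sets_M B q _ _ dominant]) auto
  also have "\<dots> \<le> r * emeasure M B"
    using E_small by (intro Liminf_le) auto
  finally show False using large by simp
qed

lemma switched_comp_bmo_pow_dense:
  assumes q: "0 < q" and Bs: "\<And>j. Bs j \<in> admissible_balls M"
    and c: "\<And>j. c j = ball_avg M f (Bs j)"
    and large: "\<And>j. flip_threshold q (bmo_pow_real p M f) j * emeasure M (Bs j)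
      < osc_integral (\<theta> * q) M f (Bs j)"
  shows "\<exists>\<epsilon>' k'. k < k' \<and> (\<forall>i<k. \<epsilon>' i = \<epsilon> i) \<and>
      (\<forall>\<epsilon>''. (\<forall>i<k'. \<epsilon>'' i = \<epsilon>' i) \<longrightarrow> of_nat n < bmo_pow q M (switched_comp c \<epsilon>''))"
proof -
  define j where "j = max k n"
  obtain b where "of_nat j * emeasure M (Bs j) < osc_integral q M (switched_comp c (\<epsilon>(j := b))) (Bs j)"
    using switched_comp_flip_osc[where c = c, OF Bs[of j] q c[of j] large[of j]] by blast
  moreover have "of_nat n * emeasure M (Bs j) \<le> of_nat j * emeasure M (Bs j)"
    unfolding j_def by (intro mult_right_mono) auto
  ultimately have "of_nat n * emeasure M (Bs j) < osc_integral q M (switched_comp c (\<epsilon>(j := b))) (Bs j)"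
    by simp
  then obtain k0 where k0: "\<And>\<epsilon>''. \<forall>i<k0. \<epsilon>'' i = (\<epsilon>(j := b)) i \<Longrightarrow>
      of_nat n * emeasure M (Bs j) < osc_integral q M (switched_comp c \<epsilon>'') (Bs j)"
    using switched_comp_osc_open[OF Bs q] by blast
  show ?thesis
  proof (intro exI conjI)
    show "k < max k0 (Suc k)" "\<forall>i<k. (\<epsilon>(j := b)) i = \<epsilon> i" using j_def by auto
    show "\<forall>\<epsilon>''. (\<forall>i<max k0 (Suc k). \<epsilon>'' i = (\<epsilon>(j := b)) i)
        \<longrightarrow> of_nat n < bmo_pow q M (switched_comp c \<epsilon>'')"
    proof (intro allI impI)
      fix \<epsilon>'' assume "\<forall>i<max k0 (Suc k). \<epsilon>'' i = (\<epsilon>(j := b)) i"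
      then have "of_nat n * emeasure M (Bs j) < osc_integral q M (switched_comp c \<epsilon>'') (Bs j)"
        by (intro k0) auto
      then show "of_nat n < bmo_pow q M (switched_comp c \<epsilon>'')"
        unfolding less_bmo_pow_iff using Bs by blast
    qed
  qed
qed

lemma exists_switched_comp_not_in_BMO:
  assumes q: "0 < q" and unbounded: "bmo_pow (\<theta> * q) M f = \<infinity>"
  shows "\<exists>c \<epsilon>. switched_comp c \<epsilon> \<notin> BMO M q"
proof -
  have "\<exists>B\<in>admissible_balls M.
      flip_threshold q (bmo_pow_real p M f) j * emeasure M B < osc_integral (\<theta> * q) M f B" for j
    unfolding less_bmo_pow_iff[symmetric] unbounded
    by (simp add: flip_threshold_def ennreal_mult_less_top of_nat_less_top)
  then obtain Bs where Bs: "\<And>j. Bs j \<in> admissible_balls M"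
    and large: "\<And>j. flip_threshold q (bmo_pow_real p M f) j * emeasure M (Bs j)
      < osc_integral (\<theta> * q) M f (Bs j)"
    by metis
  define c where "c j = ball_avg M f (Bs j)" for j
  obtain \<epsilon> where unbounded: "\<And>n. of_nat n < bmo_pow q M (switched_comp c \<epsilon>)"
    using Baire_cylinders[where P = "\<lambda>n \<epsilon>. of_nat n < bmo_pow q M (switched_comp c \<epsilon>)",
        OF switched_comp_bmo_pow_dense[OF q Bs c_def large]]
    by blast
  have "\<not> bmo_pow q M (switched_comp c \<epsilon>) < \<infinity>"
  proof
    assume "bmo_pow q M (switched_comp c \<epsilon>) < \<infinity>"
    then obtain n where "bmo_pow q M (switched_comp c \<epsilon>) < of_nat n"
      using ennreal_Ex_less_of_nat by (auto simp: infinity_ennreal_def)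
    then show False using unbounded[of n] by simp
  qed
  then show ?thesis unfolding BMO_def by blast
qed

end

theorem lemma5p2p1:
  fixes M :: "'a::metric_space measure" and p1 p2 :: real
  assumes "sets M = sets borel"
    and "1 \<le> p1" and "p1 < p2"
    and "BMO M p2 \<subset> BMO M p1"
  shows "\<forall>\<alpha>::real. 1 < \<alpha> \<longrightarrow> BMO M (\<alpha> * p2) \<subset> BMO M (\<alpha> * p1)"
proof (intro allI impI)
  fix \<alpha> :: real assume "1 < \<alpha>"
  define \<theta> where "\<theta> = 1 / \<alpha>"
  have \<theta>: "0 < \<theta>" "\<theta> \<le> 1" "\<theta> \<le> p1" "\<theta> * (\<alpha> * p2) = p2" "p1 / \<theta> = \<alpha> * p1"
    using \<open>1 < \<alpha>\<close> \<open>1 \<le> p1\<close> unfolding \<theta>_def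
    by (auto simp: divide_le_eq intro: order_trans[OF _ mult_mono[of 1 p1 1 \<alpha>]])
  obtain f where f: "f \<in> BMO M p1" "f \<notin> BMO M p2" using assms(4) by blast
  then have "bmo_pow (\<theta> * (\<alpha> * p2)) M f = \<infinity>"
    unfolding \<theta>(4) BMO_def by (simp add: not_less top_unique)
  then obtain c \<epsilon> where "(\<lambda>x. switched_powr_sum \<theta> c \<epsilon> (f x)) \<notin> BMO M (\<alpha> * p2)"
    using exists_switched_comp_not_in_BMO[OF assms(1) f(1) \<theta>(1-3), of "\<alpha> * p2"]
      \<open>1 < \<alpha>\<close> assms(2,3) by auto
  moreover have "(\<lambda>x. switched_powr_sum \<theta> c \<epsilon> (f x)) \<in> BMO M (\<alpha> * p1)"
    using switched_comp_in_BMO[OF assms(1) f(1) \<theta>(1-3)] unfolding \<theta>(5) .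
  moreover have "BMO M (\<alpha> * p2) \<subseteq> BMO M (\<alpha> * p1)"
    using \<open>1 < \<alpha>\<close> assms(2,3) by (intro BMO_antimono[OF assms(1)]) auto
  ultimately show "BMO M (\<alpha> * p2) \<subset> BMO M (\<alpha> * p1)" by blast
qed

end
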